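(* Given an $L_1$-periodic tiling $T$ of type $(\gamma_1,\gamma_2,\gamma_3)$ with $\gamma_1,\gamma_2,\gamma_3>0$ and a source $z\neq0$ in $T$, let $T'=\mu_z(T)$ be the flipped tiling. Then \[ h_{T'}(x)=\begin{cases}h_T(x),&x\notin z+L_1,\\ h_T(x)+3,&\text{else}.\end{cases} \] Similarly, for a sink $z\neq0$ in $T$ and $T'=\mu_z(T)$, \[ h_{T'}(x)=\begin{cases}h_T(x),&x\notin z+L_1,\\ h_T(x)-3,&\text{else}.\end{cases} \]
   Context: Let $u^\top=(1,0)$, $v^\top=-(\tfrac12,\tfrac{\sqrt3}{2})$, $w=-(u+v)$, $L_0=\langle u,v\rangle$, and $L_1\le L_0$ a full-rank sublattice. An $L_1$-periodic tiling is an $L_1$-invariant map $T\colon L_0\to\{U,V,W\}$ such that for every $x$ exactly one of $T(x)=W$, $T(x+u)=V$, $T(x-v)=U$ holds; $T(x)$ removes one arrow of the upward triangle $x\to x+u\to x-v\to x$ ($U$: $x\to x+u$; $V$: $x-v\to x$; $W$: $x+u\to x-v$), and an arrow $x\to x+\alpha$ ($\alpha\in\{u,v,w\}$) is in $T$ if not removed. The type of $T$ counts the values $U,V,W$ over $L_0/L_1$. The height function $h_T$ satisfies $h_T(0)=0$ and $h_T(x+\alpha)=h_T(x)+1$ if $x\to x+\alpha$ is in $T$, else $h_T(x)-2$. A source (resp. sink) is a point where no arrow in $T$ ends (resp. starts). The flip $\mu_z(T)$ at a source $z$ is the tiling whose set of removed arrows is obtained from that of $T$ by deleting all arrows ending in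 $z+L_1$ and adding all arrows starting in $z+L_1$ (so $z$ becomes a sink); dually for a sink (delete removed arrows starting in $z+L_1$, add all arrows ending in $z+L_1$). Geometrically, the three lozenges meeting at each point of $z+L_1$ are replaced by the opposite configuration. *)

theory Defs
  imports Main "HOL-Library.Product_Plus"
begin

text \<open>Points of L_0 are written in the basis (u,v): the pair (a,b) stands for a*u + b*v.
  Thus u = (1,0), v = (0,1), w = -(u+v) = (-1,-1).\<close>

type_synonym pt = "int \<times> int"

definition uu :: pt where "uu = (1, 0)"
definition vv :: pt where "vv = (0, 1)"
definition ww :: pt where "ww = (-1, -1)"

datatype tile = U | V | W
datatype dir = Du | Dv | Dw

definition dvec :: "dir \<Rightarrow> pt" where
  "dvec d = (case d of Du \<Rightarrow> uu | Dv \<Rightarrow> vv | Dw \<Rightarrow> ww)"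

type_synonym arrow = "pt \<times> dir"

definition astart :: "arrow \<Rightarrow> pt" where "astart a = fst a"
definition aend :: "arrow \<Rightarrow> pt" where "aend a = fst a + dvec (snd a)"

definition full_rank_sublattice :: "pt set \<Rightarrow> bool" where
  "full_rank_sublattice L1 \<longleftrightarrow>
     0 \<in> L1 \<and> (\<forall>a\<in>L1. \<forall>b\<in>L1. a + b \<in> L1) \<and> (\<forall>a\<in>L1. - a \<in> L1) \<and>
     (\<exists>p\<in>L1. \<exists>q\<in>L1. fst p * snd q - snd p * fst q \<noteq> 0)"

definition coset :: "pt set \<Rightarrow> pt \<Rightarrow> pt set" where
  "coset L1 z = (\<lambda>l. z + l) ` L1"

definition periodic_tiling :: "pt set \<Rightarrow> (pt \<Rightarrow> tile) \<Rightarrow> bool" where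
  "periodic_tiling L1 T \<longleftrightarrow>
     (\<forall>x. \<forall>l\<in>L1. T (x + l) = T x) \<and>
     (\<forall>x. let P = (T x = W); Q = (T (x + uu) = V); R = (T (x - vv) = U) in
          (P \<and> \<not> Q \<and> \<not> R) \<or> (\<not> P \<and> Q \<and> \<not> R) \<or> (\<not> P \<and> \<not> Q \<and> R))"

text \<open>Number of cosets in L_0/L_1 on which T takes the value t (entries of the type).\<close>
definition type_count :: "pt set \<Rightarrow> (pt \<Rightarrow> tile) \<Rightarrow> tile \<Rightarrow> nat" where
  "type_count L1 T t = card {C. \<exists>x. C = coset L1 x \<and> T x = t}"

text \<open>Removed arrows: T x = U removes x -> x+u; V removes x-v -> x; W removes x+u -> x-v.\<close>
definition removed :: "(pt \<Rightarrow> tile) \<Rightarrow> arrow set" where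
  "removed T = {(x, Du) | x. T x = U} \<union> {(x - vv, Dv) | x. T x = V} \<union> {(x + uu, Dw) | x. T x = W}"

definition in_tiling :: "(pt \<Rightarrow> tile) \<Rightarrow> arrow \<Rightarrow> bool" where
  "in_tiling T a \<longleftrightarrow> a \<notin> removed T"

definition is_source :: "(pt \<Rightarrow> tile) \<Rightarrow> pt \<Rightarrow> bool" where
  "is_source T z \<longleftrightarrow> \<not> (\<exists>a. in_tiling T a \<and> aend a = z)"

definition is_sink :: "(pt \<Rightarrow> tile) \<Rightarrow> pt \<Rightarrow> bool" where
  "is_sink T z \<longleftrightarrow> \<not> (\<exists>a. in_tiling T a \<and> astart a = z)"

definition flip :: "pt set \<Rightarrow> (pt \<Rightarrow> tile) \<Rightarrow> pt \<Rightarrow> (pt \<Rightarrow> tile)" where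
  "flip L1 T z =
     (if is_source T z then
        (THE T'. removed T' = (removed T - {a. aend a \<in> coset L1 z}) \<union> {a. astart a \<in> coset L1 z})
      else
        (THE T'. removed T' = (removed T - {a. astart a \<in> coset L1 z}) \<union> {a. aend a \<in> coset L1 z}))"

definition is_height :: "(pt \<Rightarrow> tile) \<Rightarrow> (pt \<Rightarrow> int) \<Rightarrow> bool" where
  "is_height T h \<longleftrightarrow> h 0 = 0 \<and>
     (\<forall>x d. h (x + dvec d) = (if in_tiling T (x, d) then h x + 1 else h x - 2))"

definition height :: "(pt \<Rightarrow> tile) \<Rightarrow> pt \<Rightarrow> int" where
  "height T = (THE h. is_height T h)"

end

theory Submission
  imports Defs
begin

text \<open>Heights are potentials for the weights \<open>+1\<close> on arrows of the tiling and \<open>-2\<close> on removed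
  arrows. Every upward and every downward triangle loses exactly one arrow, so these weights are
  closed and a periodic tiling has a unique normalised potential. At a source all incoming arrows
  are removed and all outgoing ones are present, so no two points of \<open>z + L\<^sub>1\<close> are adjacent.
  Flipping makes exactly the arrows into \<open>z + L\<^sub>1\<close> present and the arrows out of it removed,
  changing their weights by \<open>+3\<close> and \<open>-3\<close>: this is adding \<open>3\<close> to the potential on \<open>z + L\<^sub>1\<close>,
  and since \<open>0 \<notin> z + L\<^sub>1\<close> the normalisation is kept.\<close>

definition int_partial_sum :: "(int \<Rightarrow> 'a::ab_group_add) \<Rightarrow> int \<Rightarrow> 'a" where
  "int_partial_sum g n = (if 0 \<le> n then sum g {0..<n} else - sum g {n..<0})"

lemma int_partial_sum_0 [simp]: "int_partial_sum g 0 = 0"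
  by (simp add: int_partial_sum_def)

lemma int_partial_sum_step: "int_partial_sum g (n + 1) = int_partial_sum g n + g n"
proof (cases "0 \<le> n")
  case True
  then have "{0..<n + 1} = insert n {0..<n}" by auto
  with True show ?thesis by (simp add: int_partial_sum_def)
next
  case False
  then have "{n..<0} = insert n {n + 1..<0}" by auto
  with False show ?thesis by (simp add: int_partial_sum_def)
qed

lemma int_shift_invariant_const:
  fixes f :: "int \<Rightarrow> 'a"
  assumes "\<And>i. f (i + 1) = f i"
  shows "f i = f 0"
proof (induct i rule: int_induct[where k = 0])
  case (step2 i)
  then show ?case using assms[of "i - 1"] by simp
qed (use assms in simp_all)

lemma int_pair_shift_invariant_const:
  fixes g :: "int \<times> int \<Rightarrow> 'a"
  assumes "\<And>x. g (x + (1, 0)) = g x" and "\<And>x. g (x + (0, 1)) = g x"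
  shows "g x = g 0"
proof -
  obtain a b where x: "x = (a, b)" by (cases x)
  have "g (a, j + 1) = g (a, j)" and "g (i + 1, 0) = g (i, 0)" for i j
    using assms(1)[of "(i, 0)"] assms(2)[of "(a, j)"] by simp_all
  then have "g (a, b) = g (a, 0)" and "g (a, 0) = g (0, 0)"
    using int_shift_invariant_const[of "\<lambda>j. g (a, j)"] int_shift_invariant_const[of "\<lambda>i. g (i, 0)"]
    by blast+
  then show ?thesis by (simp add: x zero_prod_def)
qed

lemma discrete_potential_exists:
  fixes f g :: "int \<times> int \<Rightarrow> 'a::ab_group_add"
  assumes closed: "\<And>x. f x + g (x + (1, 0)) = g x + f (x + (0, 1))"
  shows "\<exists>h. h 0 = 0 \<and> (\<forall>x. h (x + (1, 0)) = h x + f x \<and> h (x + (0, 1)) = h x + g x)"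
proof -
  define h where
    "h x = int_partial_sum (\<lambda>i. f (i, 0)) (fst x) + int_partial_sum (\<lambda>j. g (fst x, j)) (snd x)" for x
  have hv: "h (x + (0, 1)) = h x + g x" for x
    by (cases x) (simp add: h_def int_partial_sum_step)
  have hu: "h (x + (1, 0)) = h x + f x" for x
  proof -
    obtain a b where x: "x = (a, b)" by (cases x)
    define D where "D j = h (a + 1, j) - h (a, j) - f (a, j)" for j
    have "D (j + 1) = D j" for j
      using closed[of "(a, j)"] hv[of "(a, j)"] hv[of "(a + 1, j)"]
      by (simp add: D_def algebra_simps)
    then have "D b = D 0" by (rule int_shift_invariant_const)
    also have "D 0 = 0" by (simp add: D_def h_def int_partial_sum_step)
    finally show ?thesis by (simp add: x D_def algebra_simps)
  qed
  have "h 0 = 0" by (simp add: h_def zero_prod_def)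
  with hu hv show ?thesis by blast
qed

lemma dvec_simps [simp]: "dvec Du = uu" "dvec Dv = vv" "dvec Dw = - uu - vv"
  by (simp_all add: dvec_def uu_def vv_def ww_def)

lemma all_dir: "(\<forall>d. P d) \<longleftrightarrow> P Du \<and> P Dv \<and> P Dw"
  by (metis dir.exhaust)

lemma removed_Du: "(x, Du) \<in> removed T \<longleftrightarrow> T x = U"
  unfolding removed_def by blast

lemma removed_Dv: "(x, Dv) \<in> removed T \<longleftrightarrow> T (x + vv) = V"
  unfolding removed_def by (auto simp: eq_diff_eq) (metis surj_pair)

lemma removed_Dw: "(x, Dw) \<in> removed T \<longleftrightarrow> T (x - uu) = W"
  unfolding removed_def by (auto simp: diff_eq_eq) (metis diff_add_cancel surj_pair)

lemma inj_removed: "inj removed"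
proof (rule injI, rule ext)
  fix T1 T2 :: "pt \<Rightarrow> tile" and x
  assume "removed T1 = removed T2"
  then have "T1 x = U \<longleftrightarrow> T2 x = U" "T1 x = V \<longleftrightarrow> T2 x = V"
    using removed_Du removed_Dv[of "x - vv"] by (metis, metis diff_add_cancel)
  then show "T1 x = T2 x" by (cases "T1 x"; cases "T2 x") auto
qed

lemma the_removed_eqI:
  assumes "removed T = R"
  shows "(THE T'. removed T' = R) = T"
  unfolding assms[symmetric] by (simp add: inj_eq[OF inj_removed])

lemma is_heightI:
  assumes "h 0 = 0"
    and "\<And>x d. h (x + dvec d) = (if (x, d) \<in> removed T then h x - 2 else h x + 1)"
  shows "is_height T h"
  using assms unfolding is_height_def in_tiling_def by simp

lemma is_height_step:
  "is_height T h \<Longrightarrow> h (x + dvec d) = (if (x, d) \<in> removed T then h x - 2 else h x + 1)"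
  unfolding is_height_def in_tiling_def by (simp del: split_paired_All)

lemma is_height_unique:
  assumes "is_height T h1" and "is_height T h2"
  shows "h1 = h2"
proof
  fix x
  have shift: "h1 (y + dvec d) - h2 (y + dvec d) = h1 y - h2 y" for y d
    using is_height_step[OF assms(1), of y d] is_height_step[OF assms(2), of y d] by simp
  have "h1 x - h2 x = h1 0 - h2 0"
    by (rule int_pair_shift_invariant_const[where g = "\<lambda>x. h1 x - h2 x"])
      (use shift[of _ Du] shift[of _ Dv] in \<open>simp_all add: uu_def vv_def\<close>)
  then show "h1 x = h2 x"
    using assms by (simp add: is_height_def)
qed

lemma height_eqI: "is_height T h \<Longrightarrow> height T = h"
  unfolding height_def by (blast intro: is_height_unique)

lemma is_height_height:
  assumes "periodic_tiling L1 T"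
  shows "is_height T (height T)"
proof -
  define w where "w a = (if a \<in> removed T then -2 else 1 :: int)" for a
  \<comment> \<open>Each upward and each downward triangle loses exactly one arrow, so its weights sum to
    \<open>1 + 1 - 2 = 0\<close>; the two triangles of a rhombus then make the weights closed.\<close>
  have up_triangle: "w (x, Du) + w (x - vv, Dv) + w (x + uu, Dw) = 0" for x
    by (cases "T x") (simp_all add: w_def removed_Du removed_Dv removed_Dw)
  have down_triangle: "w (x - vv, Du) + w (x + uu - vv, Dv) + w (x + uu, Dw) = 0" for x
    using assms unfolding periodic_tiling_def Let_def
    by (auto simp: w_def removed_Du removed_Dv removed_Dw simp del: split_paired_All)
  have closed: "w (x, Du) + w (x + uu, Dv) = w (x, Dv) + w (x + vv, Du)" for x
    using up_triangle[of "x + vv"] down_triangle[of "x + vv"] by (simp add: algebra_simps)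
  obtain h where h0: "h 0 = 0"
    and hu: "\<And>x. h (x + uu) = h x + w (x, Du)" and hv: "\<And>x. h (x + vv) = h x + w (x, Dv)"
    using discrete_potential_exists[of "\<lambda>x. w (x, Du)" "\<lambda>x. w (x, Dv)", folded uu_def vv_def] closed
    by blast
  have hw: "h (x - uu - vv) = h x + w (x, Dw)" for x
    using down_triangle[of "x - uu"] hu[of "x - uu - vv"] hv[of "x - vv"] by (simp add: algebra_simps)
  have "is_height T h"
  proof (rule is_heightI)
    fix x d
    show "h (x + dvec d) = (if (x, d) \<in> removed T then h x - 2 else h x + 1)"
      using hu[of x] hv[of x] hw[of x] by (cases d) (simp_all add: w_def algebra_simps)
  qed (fact h0)
  then show ?thesis by (simp add: height_eqI)
qed

lemma is_source_iff: "is_source T c \<longleftrightarrow> (\<forall>d. (c - dvec d, d) \<in> removed T)"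
  unfolding is_source_def in_tiling_def aend_def
  by (metis diff_add_cancel add_diff_cancel prod.collapse fst_conv snd_conv)

lemma is_sink_iff: "is_sink T c \<longleftrightarrow> (\<forall>d. (c, d) \<in> removed T)"
  unfolding is_sink_def in_tiling_def astart_def by (metis prod.collapse fst_conv)

lemma is_source_iff_tiles: "is_source T c \<longleftrightarrow> T (c - uu) = U \<and> T c = V \<and> T (c + vv) = W"
  by (auto simp: is_source_iff removed_Du removed_Dv removed_Dw all_dir algebra_simps)

lemma is_sink_iff_tiles: "is_sink T c \<longleftrightarrow> T c = U \<and> T (c + vv) = V \<and> T (c - uu) = W"
  by (auto simp: is_sink_iff removed_Du removed_Dv removed_Dw all_dir)

lemma source_outgoing_in_tiling: "is_source T c \<Longrightarrow> in_tiling T (c, d)"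
  by (cases d) (simp_all add: is_source_iff_tiles in_tiling_def removed_Du removed_Dv removed_Dw)

lemma sink_incoming_in_tiling: "is_sink T c \<Longrightarrow> in_tiling T (c - dvec d, d)"
  by (cases d) (simp_all add: is_sink_iff_tiles in_tiling_def removed_Du removed_Dv removed_Dw algebra_simps)

lemma source_not_adjacent_source:
  assumes "is_source T c"
  shows "\<not> is_source T (c + dvec d)"
proof
  assume "is_source T (c + dvec d)"
  then have "(c, d) \<in> removed T"
    unfolding is_source_iff by (metis add_diff_cancel)
  with source_outgoing_in_tiling[OF assms] show False
    by (simp add: in_tiling_def)
qed

lemma sink_not_adjacent_sink:
  assumes "is_sink T (c + dvec d)"
  shows "\<not> is_sink T c"
proof
  assume "is_sink T c"
  then have "(c, d) \<in> removed T"
    by (simp add: is_sink_iff)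
  with sink_incoming_in_tiling[OF assms, of d] show False
    by (simp add: in_tiling_def)
qed

text \<open>A source \<open>c\<close> carries the tiles \<open>U, V, W\<close> at \<open>c - u, c, c + v\<close> and a sink carries
  \<open>W, U, V\<close> there; the flip exchanges the two patterns around every point of \<open>C\<close>.\<close>

definition flip_source_tiles :: "pt set \<Rightarrow> (pt \<Rightarrow> tile) \<Rightarrow> pt \<Rightarrow> tile" where
  "flip_source_tiles C T x =
     (if x \<in> C then U else if x - vv \<in> C then V else if x + uu \<in> C then W else T x)"

definition flip_sink_tiles :: "pt set \<Rightarrow> (pt \<Rightarrow> tile) \<Rightarrow> pt \<Rightarrow> tile" where
  "flip_sink_tiles C T x =
     (if x \<in> C then V else if x - vv \<in> C then W else if x + uu \<in> C then U else T x)"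

lemma removed_flip_source_tiles:
  assumes "\<And>c. c \<in> C \<Longrightarrow> is_source T c"
  shows "removed (flip_source_tiles C T) = (removed T - {a. aend a \<in> C}) \<union> {a. astart a \<in> C}"
    (is "?L = ?R")
proof -
  have V: "T x = V" if "x \<in> C" for x
    using assms[OF that] by (simp add: is_source_iff_tiles)
  have U: "T x = U" if "x + uu \<in> C" for x
    using assms[OF that] by (simp add: is_source_iff_tiles)
  have W: "T x = W" if "x - vv \<in> C" for x
    using assms[OF that] by (simp add: is_source_iff_tiles)
  have apart: "x + dvec d \<notin> C" if "x \<in> C" for x d
    using assms source_not_adjacent_source that by blast
  have "(y, d) \<in> ?L \<longleftrightarrow> (y, d) \<in> ?R" for y d
    using V U W apart[of y Dv] apart[of y Dw] apart[of "y - uu" Du] apart[of "y - uu - vv" Dv]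
    by (cases d)
      (auto simp: removed_Du removed_Dv removed_Dw aend_def astart_def flip_source_tiles_def algebra_simps)
  then show ?thesis
    by (simp add: set_eq_iff)
qed

lemma removed_flip_sink_tiles:
  assumes "\<And>c. c \<in> C \<Longrightarrow> is_sink T c"
  shows "removed (flip_sink_tiles C T) = (removed T - {a. astart a \<in> C}) \<union> {a. aend a \<in> C}"
    (is "?L = ?R")
proof -
  have U: "T x = U" if "x \<in> C" for x
    using assms[OF that] by (simp add: is_sink_iff_tiles)
  have W: "T x = W" if "x + uu \<in> C" for x
    using assms[OF that] by (simp add: is_sink_iff_tiles)
  have V: "T x = V" if "x - vv \<in> C" for x
    using assms[OF that] by (simp add: is_sink_iff_tiles)
  have apart: "x + dvec d \<notin> C" if "x \<in> C" for x d
    using assms sink_not_adjacent_sink that by blast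
  have "(y, d) \<in> ?L \<longleftrightarrow> (y, d) \<in> ?R" for y d
    using V U W apart[of y Du] apart[of "y - vv" Du] apart[of "y + uu" Dw] apart[of "y - uu - vv" Dv]
    by (cases d)
      (auto simp: removed_Du removed_Dv removed_Dw aend_def astart_def flip_sink_tiles_def algebra_simps)
  then show ?thesis
    by (simp add: set_eq_iff)
qed

lemma is_height_flip_source:
  assumes h: "is_height T h" and "0 \<notin> C" and sources: "\<And>c. c \<in> C \<Longrightarrow> is_source T c"
  shows "is_height (flip_source_tiles C T) (\<lambda>x. if x \<in> C then h x + 3 else h x)"
    (is "is_height ?T' ?h'")
proof (rule is_heightI)
  show "?h' 0 = 0"
    using h \<open>0 \<notin> C\<close> by (simp add: is_height_def)
next
  fix x d
  have into_C: "(x, d) \<in> removed T" if "x + dvec d \<in> C"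
    using sources[OF that] unfolding is_source_iff by (metis add_diff_cancel)
  have out_of_C: "(x, d) \<notin> removed T" if "x \<in> C"
    using source_outgoing_in_tiling[OF sources[OF that]] unfolding in_tiling_def .
  show "?h' (x + dvec d) = (if (x, d) \<in> removed ?T' then ?h' x - 2 else ?h' x + 1)"
    using is_height_step[OF h, of x d] into_C out_of_C
    by (cases "x \<in> C"; cases "x + dvec d \<in> C")
      (auto simp: removed_flip_source_tiles[OF sources] aend_def astart_def)
qed

lemma is_height_flip_sink:
  assumes h: "is_height T h" and "0 \<notin> C" and sinks: "\<And>c. c \<in> C \<Longrightarrow> is_sink T c"
  shows "is_height (flip_sink_tiles C T) (\<lambda>x. if x \<in> C then h x - 3 else h x)"
    (is "is_height ?T' ?h'")
proof (rule is_heightI)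
  show "?h' 0 = 0"
    using h \<open>0 \<notin> C\<close> by (simp add: is_height_def)
next
  fix x d
  have out_of_C: "(x, d) \<in> removed T" if "x \<in> C"
    using sinks[OF that] by (simp add: is_sink_iff)
  have into_C: "(x, d) \<notin> removed T" if "x + dvec d \<in> C"
    using sink_incoming_in_tiling[OF sinks[OF that], of d] unfolding in_tiling_def by simp
  show "?h' (x + dvec d) = (if (x, d) \<in> removed ?T' then ?h' x - 2 else ?h' x + 1)"
    using is_height_step[OF h, of x d] into_C out_of_C
    by (cases "x \<in> C"; cases "x + dvec d \<in> C")
      (auto simp: removed_flip_sink_tiles[OF sinks] aend_def astart_def)
qed

lemma zero_notin_coset:
  assumes "full_rank_sublattice L1" and "z \<notin> L1"
  shows "0 \<notin> coset L1 z"
proof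
  assume "0 \<in> coset L1 z"
  then obtain l where "l \<in> L1" and "z + l = 0"
    unfolding coset_def by auto
  then have "- l \<in> L1" and "z = - l"
    using assms(1) unfolding full_rank_sublattice_def by (auto simp: add_eq_0_iff)
  with assms(2) show False by simp
qed

lemma periodic_tiling_coset:
  assumes "periodic_tiling L1 T" and "c \<in> coset L1 z"
  shows "T (c + y) = T (z + y)"
proof -
  obtain l where "l \<in> L1" and "c = z + l"
    using assms(2) unfolding coset_def by blast
  then show ?thesis
    using assms(1) unfolding periodic_tiling_def by (metis add.commute add.left_commute)
qed

lemma is_source_coset:
  assumes "periodic_tiling L1 T" and "is_source T z" and "c \<in> coset L1 z"
  shows "is_source T c"
  using assms periodic_tiling_coset[OF assms(1,3), of 0] periodic_tiling_coset[OF assms(1,3), of "- uu"]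
    periodic_tiling_coset[OF assms(1,3), of vv]
  by (simp add: is_source_iff_tiles)

lemma is_sink_coset:
  assumes "periodic_tiling L1 T" and "is_sink T z" and "c \<in> coset L1 z"
  shows "is_sink T c"
  using assms periodic_tiling_coset[OF assms(1,3), of 0] periodic_tiling_coset[OF assms(1,3), of "- uu"]
    periodic_tiling_coset[OF assms(1,3), of vv]
  by (simp add: is_sink_iff_tiles)

lemma flip_source_eq:
  assumes "periodic_tiling L1 T" and "is_source T z"
  shows "flip L1 T z = flip_source_tiles (coset L1 z) T"
proof -
  have "removed (flip_source_tiles (coset L1 z) T) =
      (removed T - {a. aend a \<in> coset L1 z}) \<union> {a. astart a \<in> coset L1 z}"
    by (rule removed_flip_source_tiles) (rule is_source_coset[OF assms])
  then show ?thesis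
    using assms(2) by (simp add: flip_def the_removed_eqI)
qed

lemma flip_sink_eq:
  assumes "periodic_tiling L1 T" and "is_sink T z"
  shows "flip L1 T z = flip_sink_tiles (coset L1 z) T"
proof -
  have "removed (flip_sink_tiles (coset L1 z) T) =
      (removed T - {a. astart a \<in> coset L1 z}) \<union> {a. aend a \<in> coset L1 z}"
    by (rule removed_flip_sink_tiles) (rule is_sink_coset[OF assms])
  moreover have "\<not> is_source T z"
    using assms(2) by (simp add: is_source_iff_tiles is_sink_iff_tiles)
  ultimately show ?thesis
    by (simp add: flip_def the_removed_eqI)
qed

theorem lemma6p39:
  fixes L1 :: "(int \<times> int) set" and T :: "int \<times> int \<Rightarrow> tile" and z :: "int \<times> int"
  assumes "full_rank_sublattice L1"
    and "periodic_tiling L1 T"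
    and "type_count L1 T U > 0" and "type_count L1 T V > 0" and "type_count L1 T W > 0"
    and "z \<notin> L1"
  shows "(is_source T z \<longrightarrow>
            (\<forall>x. height (flip L1 T z) x =
                   (if x \<in> coset L1 z then height T x + 3 else height T x))) \<and>
         (is_sink T z \<longrightarrow>
            (\<forall>x. height (flip L1 T z) x =
                   (if x \<in> coset L1 z then height T x - 3 else height T x)))"
proof -
  have h: "is_height T (height T)"
    using assms(2) by (rule is_height_height)
  have "0 \<notin> coset L1 z"
    using assms(1,6) by (rule zero_notin_coset)
  have "height (flip L1 T z) = (\<lambda>x. if x \<in> coset L1 z then height T x + 3 else height T x)"
    if "is_source T z"
    using assms(2) that \<open>0 \<notin> coset L1 z\<close>
    by (simp add: flip_source_eq height_eqI is_height_flip_source[OF h] is_source_coset)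
  moreover have "height (flip L1 T z) = (\<lambda>x. if x \<in> coset L1 z then height T x - 3 else height T x)"
    if "is_sink T z"
    using assms(2) that \<open>0 \<notin> coset L1 z\<close>
    by (simp add: flip_sink_eq height_eqI is_height_flip_sink[OF h] is_sink_coset)
  ultimately show ?thesis
    by simp
qed

end
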